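(* Fix an integer $K\ge 1$ and $r\in(0,1/2)$. For the synchronous space-time-coded decode-and-forward relay network with $K$ relays described in the context, the end-to-end outage probability satisfies $$d_{stc}(r):=\lim_{\mathrm{SNR}\to\infty}-\frac{\log \Pr\left[I_{stc}<R(\mathrm{SNR})\right]}{\log \mathrm{SNR}}=(K+1)(1-2r).$$ In other words, the lower bound $(K+1)(1-2r)\le d_{stc}(r)$ is tight.
   Context: Network: a source $N_S$, $K$ relays $N_{R_1},\dots,N_{R_K}$ and a destination $N_D$. For each transmitter/receiver pair $(i,j)$ with $i\in\{S,R_1,\dots,R_K\}$ and $j\in\{R_1,\dots,R_K,D\}$, $i\neq j$, the channel gain $\alpha_{i,j}$ is a zero-mean circularly symmetric complex Gaussian random variable with variance $\sigma^2_{i,j}>0$. All gains are mutually independent, so $|\alpha_{i,j}|^2$ is exponentially distributed with parameter $\lambda_{i,j}=1/\sigma^2_{i,j}$. For $\mathrm{SNR}>0$ set $\rho_0=\frac{2}{K+1}\mathrm{SNR}$. The target rate is $R=R(\mathrm{SNR})=r\log(1+\mathrm{SNR}\,\sigma^2_{S,D})$, where $r$ is the multiplexing gain. All logarithms are taken in one fixed base. Transmission has two phases. - Phase 1: the source broadcasts. Relay $R_k$ decodes successfully iff $I_{S,R_k}:=\frac12\log(1+\rho_0|\alpha_{S,R_k}|^2)\ge R$. The random decoding set $\mathcal D(s)$ is the set of successful relays. - Phase 2: the relays in $\mathcal D(s)$ transmit, jointly encoding with i.i.d. complex Gaussian codebooks that are independent of the source codebook and perfectly symbol-synchronized. Conditioned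 on $\mathcal D(s)$, the end-to-end mutual information is $$I_{stc}=\frac12\log\left(1+\rho_0|\alpha_{S,D}|^2\right)+\frac12\log\left(1+\rho_0\sum_{R_k\in\mathcal D(s)}|\alpha_{R_k,D}|^2\right),$$ where an empty sum equals $0$. The probability $\Pr[I_{stc}<R]$ averages over the gains, including the randomness of $\mathcal D(s)$. *)

theory Defs
  imports "HOL-Probability.Probability"
begin

text \<open>Links of the relay network that enter the end-to-end mutual information:
  source-destination, source-relay k, relay k-destination (relays indexed 0..K-1).\<close>
datatype link = SD | SR nat | RD nat

definition links :: "nat \<Rightarrow> link set" where
  "links K = {SD} \<union> SR ` {..<K} \<union> RD ` {..<K}"

definition rho0 :: "nat \<Rightarrow> real \<Rightarrow> real" where
  "rho0 K snr = 2 / (real K + 1) * snr"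

definition target_rate :: "real \<Rightarrow> real \<Rightarrow> real \<Rightarrow> real \<Rightarrow> real" where
  "target_rate b r sSD snr = r * log b (1 + snr * sSD)"

text \<open>decoding set D(s): relays k < K with I_{S,R_k} >= R; g are the channel power gains |alpha|^2\<close>
definition decoding_set :: "real \<Rightarrow> nat \<Rightarrow> real \<Rightarrow> real \<Rightarrow> (link \<Rightarrow> real) \<Rightarrow> nat set" where
  "decoding_set b K snr R g =
     {k. k < K \<and> (1/2) * log b (1 + rho0 K snr * g (SR k)) \<ge> R}"

definition I_stc :: "real \<Rightarrow> nat \<Rightarrow> real \<Rightarrow> real \<Rightarrow> (link \<Rightarrow> real) \<Rightarrow> real" where
  "I_stc b K snr R g =
     (1/2) * log b (1 + rho0 K snr * g SD)
   + (1/2) * log b (1 + rho0 K snr * (\<Sum>k\<in>decoding_set b K snr R g. g (RD k)))"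

end

theory Submission
  imports Defs "HOL-Real_Asymp.Real_Asymp"
begin

text \<open>
  Every term of the mutual information has the form 1/2 log_b (1 + rho x); it
  falls below the rate R exactly when x lies below the threshold T = (b^(2R) - 1)/rho.  Hence
  an outage forces the direct gain and, for every relay, either its first-hop or its
  second-hop gain below T: some "cut" of K+1 links is simultaneously weak.  Conversely, if
  the direct link and all first hops are below T, no relay decodes and the outage occurs.
  For independent exponential gains, K+1 given links are all below t with probability of
  exact order t^(K+1); so the outage probability is squeezed between c T^(K+1) and
  C T^(K+1).  With R = r log_b(1 + SNR sigma^2) the threshold behaves like SNR^(2r-1), and
  the exponent follows by a sandwich argument.
\<close>

text \<open>The gain level below which a link of SNR-scaling rho cannot support rate R.\<close>
definition outage_threshold :: "real \<Rightarrow> real \<Rightarrow> real \<Rightarrow> real" where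
  "outage_threshold b \<rho> R = (b powr (2 * R) - 1) / \<rho>"

lemma half_log_less_iff:
  fixes b \<rho> x R :: real
  assumes "1 < b" and "0 < \<rho>" and "0 \<le> x"
  shows "(1/2) * log b (1 + \<rho> * x) < R \<longleftrightarrow> x < outage_threshold b \<rho> R"
proof -
  have pos: "0 < 1 + \<rho> * x" using assms by (simp add: add_pos_nonneg)
  have "(1/2) * log b (1 + \<rho> * x) < R \<longleftrightarrow> log b (1 + \<rho> * x) < 2 * R" by linarith
  also have "\<dots> \<longleftrightarrow> 1 + \<rho> * x < b powr (2 * R)" using log_less_iff[OF assms(1) pos] .
  also have "\<dots> \<longleftrightarrow> x < outage_threshold b \<rho> R"
    using assms(2) by (simp add: outage_threshold_def field_simps)
  finally show ?thesis .
qed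

lemma half_log_mono:
  fixes b \<rho> x y :: real
  assumes "1 < b" and "0 < \<rho>" and "0 \<le> x" and "x \<le> y"
  shows "(1/2) * log b (1 + \<rho> * x) \<le> (1/2) * log b (1 + \<rho> * y)"
  using assms by (simp add: add_pos_nonneg mult_left_mono)

text \<open>Link terms are nonnegative, so each of the two phases alone must stay below R in outage.\<close>
lemma half_log_nonneg:
  fixes b \<rho> x :: real
  assumes "1 < b" and "0 < \<rho>" and "0 \<le> x"
  shows "0 \<le> (1/2) * log b (1 + \<rho> * x)"
  using half_log_mono[OF assms(1,2) order_refl assms(3)] by simp

lemma threshold_of_target_rate:
  fixes b r \<sigma> s :: real
  assumes "1 < b" and "0 < \<sigma>" and "0 < s"
  shows "outage_threshold b (rho0 K s) (target_rate b r \<sigma> s)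
           = ((1 + s * \<sigma>) powr (2 * r) - 1) / (2 / (real K + 1) * s)"
proof -
  have "b powr (2 * (r * log b (1 + s * \<sigma>))) = (b powr log b (1 + s * \<sigma>)) powr (2 * r)"
    by (simp add: powr_powr mult_ac)
  also have "\<dots> = (1 + s * \<sigma>) powr (2 * r)"
    using assms by (simp add: add_pos_pos)
  finally have "b powr (2 * (r * log b (1 + s * \<sigma>))) = (1 + s * \<sigma>) powr (2 * r)" .
  thus ?thesis by (simp add: outage_threshold_def target_rate_def rho0_def)
qed

lemma outage_necessary:
  fixes g :: "link \<Rightarrow> real"
  assumes b: "1 < b" and s: "0 < s" and g: "\<And>l. l \<in> links K \<Longrightarrow> 0 \<le> g l"
    and outage: "I_stc b K s R g < R"
  defines "T \<equiv> outage_threshold b (rho0 K s) R"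
  shows "g SD < T \<and> (\<forall>k<K. g (SR k) < T \<or> g (RD k) < T)"
proof -
  let ?h = "\<lambda>x. (1/2) * log b (1 + rho0 K s * x)"
  have \<rho>: "0 < rho0 K s" using s by (simp add: rho0_def)
  define D where "D = decoding_set b K s R g"
  have D_sub: "D \<subseteq> {..<K}" by (auto simp: D_def decoding_set_def)
  have g_SD: "0 \<le> g SD" and g_SR: "\<And>k. k < K \<Longrightarrow> 0 \<le> g (SR k)"
    and g_RD: "\<And>k. k < K \<Longrightarrow> 0 \<le> g (RD k)"
    using g by (auto simp: links_def)
  have sum_nonneg: "0 \<le> (\<Sum>k\<in>D. g (RD k))"
    using D_sub g_RD by (intro sum_nonneg) auto
  have split: "?h (g SD) + ?h (\<Sum>k\<in>D. g (RD k)) < R"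
    using outage by (simp add: I_stc_def D_def)
  have h_direct: "0 \<le> ?h (g SD)" and h_relayed: "0 \<le> ?h (\<Sum>k\<in>D. g (RD k))"
    using half_log_nonneg[OF b \<rho>] g_SD sum_nonneg by auto
  have "?h (g SD) < R" using split h_relayed by linarith
  hence "g SD < T" unfolding T_def using half_log_less_iff[OF b \<rho> g_SD] by blast
  moreover have "g (RD k) < T" if k: "k < K" and decoded: "\<not> g (SR k) < T" for k
  proof -
    have "k \<in> D"
      using k decoded half_log_less_iff[OF b \<rho> g_SR[OF k], of R]
      by (simp add: D_def decoding_set_def T_def not_less)
    hence "g (RD k) \<le> (\<Sum>k\<in>D. g (RD k))"
      using D_sub g_RD by (intro member_le_sum) (auto intro: finite_subset)
    hence "?h (g (RD k)) \<le> ?h (\<Sum>k\<in>D. g (RD k))"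
      using half_log_mono[OF b \<rho> g_RD[OF k]] by blast
    with split h_direct have "?h (g (RD k)) < R" by linarith
    thus "g (RD k) < T"
      unfolding T_def using half_log_less_iff[OF b \<rho> g_RD[OF k]] by blast
  qed
  ultimately show ?thesis by blast
qed

text \<open>Sufficient condition for outage: if the direct link and all first hops are below the
  threshold, no relay decodes and the direct link alone cannot carry the rate.\<close>
lemma outage_sufficient:
  fixes g :: "link \<Rightarrow> real"
  assumes b: "1 < b" and s: "0 < s" and g: "\<And>l. l \<in> links K \<Longrightarrow> 0 \<le> g l"
    and direct: "g SD < outage_threshold b (rho0 K s) R"
    and first_hop: "\<And>k. k < K \<Longrightarrow> g (SR k) < outage_threshold b (rho0 K s) R"
  shows "I_stc b K s R g < R"
proof -
  have \<rho>: "0 < rho0 K s" using s by (simp add: rho0_def)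
  have "\<not> R \<le> (1/2) * log b (1 + rho0 K s * g (SR k))" if "k < K" for k
    using that first_hop g[of "SR k"] half_log_less_iff[OF b \<rho>]
    by (simp add: links_def not_le)
  hence "decoding_set b K s R g = {}" by (auto simp: decoding_set_def)
  moreover have "(1/2) * log b (1 + rho0 K s * g SD) < R"
    using direct g[of SD] half_log_less_iff[OF b \<rho>] by (simp add: links_def)
  ultimately show ?thesis by (simp add: I_stc_def)
qed

text \<open>The mutual information as a sum over a fixed index set, which makes it measurable.\<close>
lemma I_stc_filtered_sum:
  "I_stc b K s R g = (1/2) * log b (1 + rho0 K s * g SD)
     + (1/2) * log b (1 + rho0 K s *
         (\<Sum>k<K. if R \<le> (1/2) * log b (1 + rho0 K s * g (SR k)) then g (RD k) else 0))"
proof -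
  have "decoding_set b K s R g = {k\<in>{..<K}. R \<le> (1/2) * log b (1 + rho0 K s * g (SR k))}"
    by (auto simp: decoding_set_def)
  thus ?thesis unfolding I_stc_def by (simp only: sum.inter_filter[OF finite_lessThan])
qed

lemma one_minus_exp_le: "0 \<le> x \<Longrightarrow> 1 - exp (- x) \<le> (x::real)"
  using exp_ge_add_one_self[of "- x"] by simp

lemma one_minus_exp_ge_linear:
  fixes t \<mu> :: real
  assumes "0 \<le> t" and "t \<le> 1" and "0 \<le> \<mu>"
  shows "t * (\<mu> * exp (- \<mu>)) \<le> 1 - exp (- (t * \<mu>))"
proof -
  have "(t * \<mu> + 1) * exp (- (t * \<mu>)) \<le> 1"
    using exp_ge_add_one_self[of "t * \<mu>"] by (simp add: exp_minus field_simps)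
  hence "t * \<mu> * exp (- (t * \<mu>)) \<le> 1 - exp (- (t * \<mu>))" by (simp add: algebra_simps)
  moreover have "exp (- \<mu>) \<le> exp (- (t * \<mu>))"
    using assms by (simp add: mult_left_le_one_le)
  hence "t * (\<mu> * exp (- \<mu>)) \<le> t * \<mu> * exp (- (t * \<mu>))"
    using assms by (simp add: mult_left_mono mult.assoc)
  ultimately show ?thesis by linarith
qed

text \<open>If p is of exact order T^n (up to positive constants), then p and T^n have the same
  exponent with respect to s: constant factors are invisible after dividing by log s.\<close>
lemma diversity_order_sandwich:
  fixes p T :: "real \<Rightarrow> real" and b c C L :: real and n :: nat
  assumes b: "1 < b" and c: "0 < c" and C: "0 < C"
    and bounds: "eventually (\<lambda>s. 0 < T s \<and> c * T s ^ n \<le> p s \<and> p s \<le> C * T s ^ n) at_top"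
    and exponent: "((\<lambda>s. - real n * ln (T s) / ln s) \<longlongrightarrow> L) at_top"
  shows "((\<lambda>s. - log b (p s) / log b s) \<longlongrightarrow> L) at_top"
proof (rule tendsto_sandwich)
  have const_vanishes: "((\<lambda>s. a / ln s) \<longlongrightarrow> 0) at_top" for a :: real
    by (intro tendsto_divide_0[OF tendsto_const] filterlim_at_top_imp_at_infinity ln_at_top)
  show "((\<lambda>s. - ln C / ln s + - real n * ln (T s) / ln s) \<longlongrightarrow> L) at_top"
    using tendsto_add[OF const_vanishes[of "- ln C"] exponent] by simp
  show "((\<lambda>s. - ln c / ln s + - real n * ln (T s) / ln s) \<longlongrightarrow> L) at_top"
    using tendsto_add[OF const_vanishes[of "- ln c"] exponent] by simp
  have "eventually (\<lambda>s. 1 < s \<and> 0 < T s \<and> c * T s ^ n \<le> p s \<and> p s \<le> C * T s ^ n) at_top"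
    using eventually_conj[OF eventually_gt_at_top[of 1] bounds] .
  moreover have "- ln C / ln s + - real n * ln (T s) / ln s \<le> - log b (p s) / log b s
      \<and> - log b (p s) / log b s \<le> - ln c / ln s + - real n * ln (T s) / ln s"
    if s: "1 < s" and T: "0 < T s" and lower: "c * T s ^ n \<le> p s" and upper: "p s \<le> C * T s ^ n"
    for s
  proof -
    have "0 < c * T s ^ n" using c T by simp
    hence p: "0 < p s" using lower by linarith
    have "ln (p s) \<le> ln (C * T s ^ n)" using upper p by simp
    hence ln_upper: "ln (p s) \<le> ln C + real n * ln (T s)" using C T by (simp add: ln_mult ln_realpow)
    have "ln (c * T s ^ n) \<le> ln (p s)" using lower p c T by simp
    hence ln_lower: "ln c + real n * ln (T s) \<le> ln (p s)" using c T by (simp add: ln_mult ln_realpow)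
    have log_to_ln: "- log b (p s) / log b s = - ln (p s) / ln s"
      using b by (simp add: log_def field_simps)
    have ln_s: "0 < ln s" using s by simp
    have "(- ln C - real n * ln (T s)) / ln s \<le> - ln (p s) / ln s"
      using ln_s ln_upper by (intro divide_right_mono) auto
    moreover have "- ln (p s) / ln s \<le> (- ln c - real n * ln (T s)) / ln s"
      using ln_s ln_lower by (intro divide_right_mono) auto
    ultimately show ?thesis unfolding log_to_ln by (simp add: diff_divide_distrib)
  qed
  ultimately show "eventually (\<lambda>s. - ln C / ln s + - real n * ln (T s) / ln s \<le> - log b (p s) / log b s) at_top"
    and "eventually (\<lambda>s. - log b (p s) / log b s \<le> - ln c / ln s + - real n * ln (T s) / ln s) at_top"
    by (auto elim!: eventually_mono)
qed

lemma threshold_asymptotics: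
  fixes r \<sigma> k :: real
  assumes "0 < r" and "r < 1/2" and "0 < \<sigma>" and "0 \<le> k"
  defines "T \<equiv> \<lambda>s. ((1 + s * \<sigma>) powr (2 * r) - 1) / (2 / (k + 1) * s)"
  shows "(T \<longlongrightarrow> 0) at_top" and "eventually (\<lambda>s. 0 < T s) at_top"
    and "((\<lambda>s. - (k + 1) * ln (T s) / ln s) \<longlongrightarrow> (k + 1) * (1 - 2 * r)) at_top"
proof -
  show "(T \<longlongrightarrow> 0) at_top" unfolding T_def using assms by real_asymp
  have "0 < T s" if "0 < s" for s
    using that assms(1,3,4) by (simp add: T_def mult_pos_pos)
  thus "eventually (\<lambda>s. 0 < T s) at_top" by (intro eventually_mono[OF eventually_gt_at_top[of 0]])
  have "((\<lambda>s. - (k + 1) * ln (T s) / ln s) \<longlongrightarrow> (- k - 1) * (2 * r - 1)) at_top"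
    unfolding T_def using assms by real_asymp
  thus "((\<lambda>s. - (k + 1) * ln (T s) / ln s) \<longlongrightarrow> (k + 1) * (1 - 2 * r)) at_top"
    by (simp add: algebra_simps)
qed

lemma finite_links: "finite (links K)"
  by (simp add: links_def)

text \<open>The cut associated with the set S of relays whose first hop is weak: the direct link, the
  first hops of relays in S and the second hops of the remaining relays.\<close>
definition cut_links :: "nat \<Rightarrow> nat set \<Rightarrow> link set" where
  "cut_links K S = insert SD (SR ` S \<union> RD ` ({..<K} - S))"

lemma cut_links_subset: "S \<subseteq> {..<K} \<Longrightarrow> cut_links K S \<subseteq> links K"
  by (auto simp: cut_links_def links_def)

lemma card_cut_links:
  assumes "S \<subseteq> {..<K}"
  shows "card (cut_links K S) = K + 1"
proof -
  have fin: "finite S" using assms finite_subset by blast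
  have "card (SR ` S \<union> RD ` ({..<K} - S)) = card S + card ({..<K} - S)"
    using fin assms by (subst card_Un_disjoint) (auto simp: card_image inj_on_def)
  also have "\<dots> = K"
    using assms fin card_mono[OF finite_lessThan assms] by (simp add: card_Diff_subset)
  finally show ?thesis
    unfolding cut_links_def using fin by (subst card_insert_disjoint) auto
qed

locale rayleigh_fading = prob_space M for M :: "'a measure" +
  fixes K :: nat and G :: "link \<Rightarrow> 'a \<Rightarrow> real" and rate :: "link \<Rightarrow> real"
  assumes rate_pos: "l \<in> links K \<Longrightarrow> 0 < rate l"
    and gain_exponential: "l \<in> links K \<Longrightarrow> distributed M lborel (G l) (exponential_density (rate l))"
    and gains_indep: "indep_vars (\<lambda>_. borel) G (links K)"
begin

lemma gain_measurable: "l \<in> links K \<Longrightarrow> G l \<in> borel_measurable M"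
  using distributed_measurable[OF gain_exponential] by simp

lemma all_gains_le_event:
  assumes "J \<subseteq> links K" and "J \<noteq> {}"
  shows "(\<Inter>l\<in>J. {\<omega>\<in>space M. G l \<omega> \<le> t}) \<in> events"
proof -
  have "{\<omega>\<in>space M. G l \<omega> \<le> t} \<in> events" if "l \<in> J" for l
  proof -
    have [measurable]: "G l \<in> borel_measurable M" using gain_measurable that assms by blast
    show ?thesis by measurable
  qed
  thus ?thesis
    using assms finite_subset[OF assms(1) finite_links] by (intro sets.finite_INT) auto
qed

lemma prob_all_gains_le:
  assumes J: "J \<subseteq> links K" "J \<noteq> {}" and t: "0 \<le> t"
  shows "prob (\<Inter>l\<in>J. {\<omega>\<in>space M. G l \<omega> \<le> t}) = (\<Prod>l\<in>J. 1 - exp (- (t * rate l)))"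
proof -
  have indep: "indep_sets (\<lambda>l. {G l -` A \<inter> space M | A. A \<in> sets borel}) (links K)"
    using gains_indep unfolding indep_vars_def2 by simp
  have "{\<omega>\<in>space M. G l \<omega> \<le> t} \<in> {G l -` A \<inter> space M | A. A \<in> sets borel}" for l
    by (rule CollectI, rule exI[of _ "{..t}"]) auto
  hence "prob (\<Inter>l\<in>J. {\<omega>\<in>space M. G l \<omega> \<le> t})
           = (\<Prod>l\<in>J. prob {\<omega>\<in>space M. G l \<omega> \<le> t})"
    using J finite_subset[OF J(1) finite_links]
    by (intro indep_setsD[OF indep]) auto
  also have "\<dots> = (\<Prod>l\<in>J. 1 - exp (- (t * rate l)))"
    using J t exponential_distributedD_le[OF gain_exponential _ rate_pos] by (intro prod.cong) auto
  finally show ?thesis .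
qed

text \<open>Almost surely all gains are nonnegative, which the deterministic outage analysis requires.\<close>
lemma AE_gains_nonneg: "AE \<omega> in M. \<forall>l\<in>links K. 0 \<le> G l \<omega>"
proof (rule AE_finite_allI[OF finite_links])
  fix l assume l: "l \<in> links K"
  have "prob {\<omega>\<in>space M. G l \<omega> \<le> 0} = 0"
    using exponential_distributedD_le[OF gain_exponential[OF l] order_refl rate_pos[OF l]] by simp
  moreover have "{\<omega>\<in>space M. G l \<omega> \<le> 0} \<in> events"
    using gain_measurable[OF l] by measurable
  ultimately have "AE \<omega> in M. \<not> G l \<omega> \<le> 0" by (simp add: prob_Collect_eq_0)
  thus "AE \<omega> in M. 0 \<le> G l \<omega>" by eventually_elim simp
qed

text \<open>A common upper bound for the rates of all links.\<close>
definition rate_sum :: real where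
  "rate_sum = (\<Sum>l\<in>links K. rate l)"

lemma rate_le_rate_sum: "l \<in> links K \<Longrightarrow> rate l \<le> rate_sum"
  unfolding rate_sum_def using rate_pos
  by (intro member_le_sum[OF _ _ finite_links]) (auto intro: less_imp_le)

lemma prob_all_gains_le_upper:
  assumes J: "J \<subseteq> links K" "J \<noteq> {}" and t: "0 \<le> t"
  shows "prob (\<Inter>l\<in>J. {\<omega>\<in>space M. G l \<omega> \<le> t}) \<le> (t * rate_sum) ^ card J"
proof -
  have "prob (\<Inter>l\<in>J. {\<omega>\<in>space M. G l \<omega> \<le> t}) = (\<Prod>l\<in>J. 1 - exp (- (t * rate l)))"
    using prob_all_gains_le[OF J t] .
  also have "\<dots> \<le> (\<Prod>l\<in>J. t * rate_sum)"
  proof (rule prod_mono)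
    fix l assume "l \<in> J"
    hence l: "l \<in> links K" using J by blast
    have "0 \<le> t * rate l" using t rate_pos[OF l] by simp
    moreover have "t * rate l \<le> t * rate_sum" using mult_left_mono[OF rate_le_rate_sum[OF l] t] .
    ultimately show "0 \<le> 1 - exp (- (t * rate l)) \<and> 1 - exp (- (t * rate l)) \<le> t * rate_sum"
      using one_minus_exp_le[of "t * rate l"] by simp
  qed
  also have "\<dots> = (t * rate_sum) ^ card J" by simp
  finally show ?thesis .
qed

lemma prob_all_gains_le_lower:
  assumes J: "J \<subseteq> links K" "J \<noteq> {}" and t: "0 \<le> t" "t \<le> 1"
  shows "(\<Prod>l\<in>J. rate l * exp (- rate l)) * t ^ card J
           \<le> prob (\<Inter>l\<in>J. {\<omega>\<in>space M. G l \<omega> \<le> t})"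
proof -
  have "(\<Prod>l\<in>J. rate l * exp (- rate l)) * t ^ card J = (\<Prod>l\<in>J. t * (rate l * exp (- rate l)))"
    by (simp add: prod.distrib mult.commute)
  also have "\<dots> \<le> (\<Prod>l\<in>J. 1 - exp (- (t * rate l)))"
  proof (rule prod_mono)
    fix l assume "l \<in> J"
    hence "0 < rate l" using J rate_pos by blast
    thus "0 \<le> t * (rate l * exp (- rate l)) \<and> t * (rate l * exp (- rate l)) \<le> 1 - exp (- (t * rate l))"
      using one_minus_exp_ge_linear[OF t] t by simp
  qed
  also have "\<dots> = prob (\<Inter>l\<in>J. {\<omega>\<in>space M. G l \<omega> \<le> t})"
    using prob_all_gains_le[OF J t(1)] by simp
  finally show ?thesis .
qed

definition outage :: "real \<Rightarrow> real \<Rightarrow> real \<Rightarrow> 'a set" where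
  "outage b s R = {\<omega>\<in>space M. I_stc b K s R (\<lambda>l. G l \<omega>) < R}"

lemma outage_event: "outage b s R \<in> events"
proof -
  have [measurable]: "G SD \<in> borel_measurable M"
    using gain_measurable by (simp add: links_def)
  have [measurable]: "(\<lambda>\<omega>. \<Sum>k<K. if R \<le> (1/2) * log b (1 + rho0 K s * G (SR k) \<omega>)
                                    then G (RD k) \<omega> else 0) \<in> borel_measurable M"
  proof (rule borel_measurable_sum)
    fix k assume "k \<in> {..<K}"
    hence [measurable]: "G (SR k) \<in> borel_measurable M" "G (RD k) \<in> borel_measurable M"
      using gain_measurable by (auto simp: links_def)
    show "(\<lambda>\<omega>. if R \<le> (1/2) * log b (1 + rho0 K s * G (SR k) \<omega>) then G (RD k) \<omega> else 0)
            \<in> borel_measurable M"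
      by measurable
  qed
  show ?thesis unfolding outage_def I_stc_filtered_sum by measurable
qed

text \<open>Union bound over the 2^K cuts: outage forces one of them to be weak, each with probability
  at most (T rate_sum)^(K+1).\<close>
lemma prob_outage_upper:
  assumes b: "1 < b" and s: "0 < s" and T_nonneg: "0 \<le> outage_threshold b (rho0 K s) R"
  shows "prob (outage b s R) \<le> 2 ^ K * (outage_threshold b (rho0 K s) R * rate_sum) ^ (K + 1)"
proof -
  define T where "T = outage_threshold b (rho0 K s) R"
  define E where "E S = (\<Inter>l\<in>cut_links K S. {\<omega>\<in>space M. G l \<omega> \<le> T})" for S
  have E_event: "E S \<in> events" if "S \<in> Pow {..<K}" for S
    unfolding E_def using that cut_links_subset by (intro all_gains_le_event) (auto simp: cut_links_def)
  have "AE \<omega> in M. \<omega> \<in> outage b s R \<longrightarrow> \<omega> \<in> (\<Union>S\<in>Pow {..<K}. E S)"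
    using AE_gains_nonneg
  proof eventually_elim
    fix \<omega> assume nonneg: "\<forall>l\<in>links K. 0 \<le> G l \<omega>"
    show "\<omega> \<in> outage b s R \<longrightarrow> \<omega> \<in> (\<Union>S\<in>Pow {..<K}. E S)"
    proof
      assume "\<omega> \<in> outage b s R"
      hence \<omega>: "\<omega> \<in> space M" and "I_stc b K s R (\<lambda>l. G l \<omega>) < R" by (auto simp: outage_def)
      hence weak: "G SD \<omega> < T" "\<And>k. k < K \<Longrightarrow> G (SR k) \<omega> < T \<or> G (RD k) \<omega> < T"
        using outage_necessary[OF b s, where g = "\<lambda>l. G l \<omega>"] nonneg by (auto simp: T_def)
      define S where "S = {k. k < K \<and> G (SR k) \<omega> < T}"
      have "\<omega> \<in> E S"
        using \<omega> weak by (force simp: E_def cut_links_def S_def)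
      thus "\<omega> \<in> (\<Union>S\<in>Pow {..<K}. E S)" by (auto simp: S_def)
    qed
  qed
  hence "prob (outage b s R) \<le> prob (\<Union>S\<in>Pow {..<K}. E S)"
    using E_event by (intro finite_measure_mono_AE sets.finite_UN) auto
  also have "\<dots> \<le> (\<Sum>S\<in>Pow {..<K}. prob (E S))"
    using E_event by (intro finite_measure_subadditive_finite) auto
  also have "\<dots> \<le> (\<Sum>S\<in>Pow {..<K}. (T * rate_sum) ^ (K + 1))"
  proof (rule sum_mono)
    fix S assume "S \<in> Pow {..<K}"
    thus "prob (E S) \<le> (T * rate_sum) ^ (K + 1)"
      using prob_all_gains_le_upper[OF cut_links_subset _ T_nonneg[folded T_def]] card_cut_links
      by (auto simp: E_def cut_links_def)
  qed
  also have "\<dots> = 2 ^ K * (T * rate_sum) ^ (K + 1)" by (simp add: card_Pow)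
  finally show ?thesis by (simp add: T_def)
qed

text \<open>The cut of all first hops being weak below any t < T forces outage, which gives a lower
  bound of order t^(K+1).\<close>
lemma prob_outage_lower:
  assumes b: "1 < b" and s: "0 < s"
    and t: "0 \<le> t" "t \<le> 1" "t < outage_threshold b (rho0 K s) R"
  shows "(\<Prod>l\<in>cut_links K {..<K}. rate l * exp (- rate l)) * t ^ (K + 1) \<le> prob (outage b s R)"
proof -
  let ?J = "cut_links K {..<K}"
  let ?W = "\<Inter>l\<in>?J. {\<omega>\<in>space M. G l \<omega> \<le> t}"
  have J: "?J \<subseteq> links K" "?J \<noteq> {}" by (auto simp: cut_links_def links_def)
  have "(\<Prod>l\<in>?J. rate l * exp (- rate l)) * t ^ (K + 1) \<le> prob ?W"
    using prob_all_gains_le_lower[OF J t(1,2)] card_cut_links[of "{..<K}" K] by simp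
  also have "\<dots> \<le> prob (outage b s R)"
  proof (rule finite_measure_mono_AE[OF _ outage_event])
    show "AE \<omega> in M. \<omega> \<in> ?W \<longrightarrow> \<omega> \<in> outage b s R"
      using AE_gains_nonneg
    proof eventually_elim
      fix \<omega> assume nonneg: "\<forall>l\<in>links K. 0 \<le> G l \<omega>"
      show "\<omega> \<in> ?W \<longrightarrow> \<omega> \<in> outage b s R"
      proof
        assume small: "\<omega> \<in> ?W"
        hence "\<omega> \<in> space M" by (auto simp: cut_links_def)
        moreover have "I_stc b K s R (\<lambda>l. G l \<omega>) < R"
          using small t(3) nonneg
          by (intro outage_sufficient[OF b s]) (force simp: cut_links_def)+
        ultimately show "\<omega> \<in> outage b s R" by (simp add: outage_def)
      qed
    qed
  qed
  finally show ?thesis .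
qed

lemma outage_order:
  fixes R :: "real \<Rightarrow> real"
  assumes b: "1 < b"
  defines "T \<equiv> \<lambda>s. outage_threshold b (rho0 K s) (R s)"
  assumes T_lim: "(T \<longlongrightarrow> 0) at_top" and T_pos: "eventually (\<lambda>s. 0 < T s) at_top"
  shows "\<exists>c C. 0 < c \<and> 0 < C \<and> eventually (\<lambda>s. 0 < T s
           \<and> c * T s ^ (K + 1) \<le> prob (outage b s (R s)) \<and> prob (outage b s (R s)) \<le> C * T s ^ (K + 1)) at_top"
proof (intro exI conjI)
  define c0 where "c0 = (\<Prod>l\<in>cut_links K {..<K}. rate l * exp (- rate l))"
  have "0 < c0" unfolding c0_def
    using cut_links_subset[of "{..<K}" K] rate_pos by (intro prod_pos) auto
  thus "0 < c0 / 2 ^ (K + 1)" by simp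
  have "0 < rate_sum" using rate_pos[of SD] rate_le_rate_sum[of SD] by (simp add: links_def)
  thus "0 < 2 ^ K * rate_sum ^ (K + 1)" by simp
  have "eventually (\<lambda>s. 0 < s \<and> 0 < T s \<and> T s < 2) at_top"
    using eventually_gt_at_top[of 0] T_pos order_tendstoD(2)[OF T_lim, of 2, OF zero_less_numeral]
    by eventually_elim auto
  thus "eventually (\<lambda>s. 0 < T s \<and> c0 / 2 ^ (K + 1) * T s ^ (K + 1) \<le> prob (outage b s (R s))
          \<and> prob (outage b s (R s)) \<le> 2 ^ K * rate_sum ^ (K + 1) * T s ^ (K + 1)) at_top"
  proof eventually_elim
    case (elim s)
    have "c0 * (T s / 2) ^ (K + 1) \<le> prob (outage b s (R s))"
      unfolding c0_def using elim by (intro prob_outage_lower[OF b]) (auto simp: T_def)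
    moreover have "prob (outage b s (R s)) \<le> 2 ^ K * (T s * rate_sum) ^ (K + 1)"
      using elim prob_outage_upper[OF b] by (simp add: T_def less_imp_le)
    ultimately show ?case
      using elim by (simp add: power_divide power_mult_distrib mult_ac)
  qed
qed

end

text \<open>The
  threshold of the target rate is explicit, the outage probability is of order T^(K+1), and the
  exponent of T^(K+1) is computed asymptotically.\<close>
theorem theorem1:
  fixes M :: "'a measure"
    and G :: "link \<Rightarrow> 'a \<Rightarrow> real"
    and \<sigma>2 :: "link \<Rightarrow> real"
    and K :: nat and r b :: real
  assumes "prob_space M"
    and "K \<ge> 1"
    and "0 < r" and "r < 1/2"
    and "1 < b"
    and "\<And>l. l \<in> links K \<Longrightarrow> 0 < \<sigma>2 l"
    and "\<And>l. l \<in> links K \<Longrightarrow> distributed M lborel (G l) (exponential_density (1 / \<sigma>2 l))"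
    and "prob_space.indep_vars M (\<lambda>_. borel) G (links K)"
  shows "((\<lambda>snr. - log b (measure M {\<omega> \<in> space M.
              I_stc b K snr (target_rate b r (\<sigma>2 SD) snr) (\<lambda>l. G l \<omega>)
                < target_rate b r (\<sigma>2 SD) snr}) / log b snr)
          \<longlongrightarrow> (real K + 1) * (1 - 2 * r)) at_top"
proof -
  interpret rayleigh_fading M K G "\<lambda>l. 1 / \<sigma>2 l"
    by (intro rayleigh_fading.intro assms(1) rayleigh_fading_axioms.intro)
       (simp_all add: assms(6,7,8))
  let ?R = "target_rate b r (\<sigma>2 SD)"
  define T where "T s = outage_threshold b (rho0 K s) (?R s)" for s
  define T' where "T' s = ((1 + s * \<sigma>2 SD) powr (2 * r) - 1) / (2 / (real K + 1) * s)" for s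
  have \<sigma>: "0 < \<sigma>2 SD" using assms(6) by (simp add: links_def)
  have T_eq: "eventually (\<lambda>s. T' s = T s) at_top"
    using eventually_gt_at_top[of 0]
    by eventually_elim (simp add: T_def T'_def threshold_of_target_rate[OF assms(5) \<sigma>])
  note asymp = threshold_asymptotics[OF assms(3,4) \<sigma> of_nat_0_le_iff[of K], folded T'_def]
  have "(T \<longlongrightarrow> 0) at_top" "eventually (\<lambda>s. 0 < T s) at_top"
    using Lim_transform_eventually[OF asymp(1) T_eq] eventually_elim2[OF asymp(2) T_eq] by simp_all
  then obtain c C where "0 < c" "0 < C" and bounds: "eventually (\<lambda>s. 0 < T s
      \<and> c * T s ^ (K + 1) \<le> prob (outage b s (?R s)) \<and> prob (outage b s (?R s)) \<le> C * T s ^ (K + 1)) at_top"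
    using outage_order[OF assms(5), of ?R, folded T_def] by blast
  have "eventually (\<lambda>s. - (real K + 1) * ln (T' s) / ln s = - real (K + 1) * ln (T s) / ln s) at_top"
    using T_eq by eventually_elim simp
  hence exponent: "((\<lambda>s. - real (K + 1) * ln (T s) / ln s) \<longlongrightarrow> (real K + 1) * (1 - 2 * r)) at_top"
    by (rule Lim_transform_eventually[OF asymp(3)])
  show ?thesis
    using diversity_order_sandwich[OF assms(5) \<open>0 < c\<close> \<open>0 < C\<close> bounds exponent]
    by (simp add: outage_def)
qed

end
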